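(* Consider the networked SEIRS model with travel flows, under the standing assumptions (A1) for every $j\in[n]$, $\sum_{i\neq j}F_{ji}=\sum_{i\neq j}F_{ij}$, and (A2) $\alpha_i,\beta_i,\sigma_i,\delta_i>0$ and initial states in $[0,1]$ with $s_i+e_i+x_i+r_i=1$. Let $$U=\begin{bmatrix}-\Sigma-\Gamma+\Phi & B\\ \Sigma & -D-\Gamma+\Phi\end{bmatrix}\in\mathbb R^{2n\times 2n}.$$ If $s(U)<0$, then the healthy state $(s,e,x,r)=(\mathbf 1,\mathbf 0,\mathbf 0,\mathbf 0)$ is locally exponentially stable (for the dynamics on the invariant set where $s_i+e_i+x_i+r_i=1$ for all $i$, i.e. for the $(e,x,r)$ dynamics obtained by substituting $s=\mathbf 1-e-x-r$).
   Context: Model: $n$ sub-populations with sizes $N_i>0$; $F_{ij}\ge 0$ is the flow of individuals from $j$ to $i$ ($F_{ii}=0$); $\gamma_j=\sum_{i\ne j}F_{ij}/N_j$; $w_{ij}=F_{ij}/\sum_{l\neq j}F_{lj}$, $w_{ii}=0$. Dynamics in vector form: $\dot s=Ar-(BX+\Gamma)s+\Phi s$, $\dot e=BXs-(\Sigma+\Gamma)e+\Phi e$, $\dot x=\Sigma e-(D+\Gamma)x+\Phi x$, $\dot r=Dx-(A+\Gamma)r+\Phi r$, where $A=\mathrm{diag}(\alpha_i)$, $B=\mathrm{diag}(\beta_i)$, $\Sigma=\mathrm{diag}(\sigma_i)$, $D=\mathrm{diag}(\delta_i)$, $X=\mathrm{diag}(x_i)$, $\Gamma=\mathrm{diag}(\gamma_i)$,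 and $\Phi=N^{-1}W\Gamma N$ with $N=\mathrm{diag}(N_i)$, $W=(w_{ij})$ (so $\Phi_{ij}=\frac{N_j}{N_i}w_{ij}\gamma_j$). For a real square matrix $M$, $s(M)$ is the largest real part of its eigenvalues. *)

theory Defs
  imports "HOL-Analysis.Analysis"
begin

text \<open>Sub-populations are indexed by a finite type 'n (so n = CARD('n)).
  N i: population sizes, F i j: flow from j to i.\<close>

definition gam :: "('n::finite \<Rightarrow> real) \<Rightarrow> ('n \<Rightarrow> 'n \<Rightarrow> real) \<Rightarrow> 'n \<Rightarrow> real" where
  "gam N F j = (\<Sum>i\<in>UNIV - {j}. F i j) / N j"

definition wgt :: "('n::finite \<Rightarrow> 'n \<Rightarrow> real) \<Rightarrow> 'n \<Rightarrow> 'n \<Rightarrow> real" where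
  "wgt F i j = (if i = j then 0 else F i j / (\<Sum>l\<in>UNIV - {j}. F l j))"

text \<open>Phi = N^-1 W Gamma N, i.e. Phi i j = N j / N i * w i j * gamma j.\<close>
definition Phi :: "('n::finite \<Rightarrow> real) \<Rightarrow> ('n \<Rightarrow> 'n \<Rightarrow> real) \<Rightarrow> 'n \<Rightarrow> 'n \<Rightarrow> real" where
  "Phi N F i j = N j / N i * wgt F i j * gam N F j"

definition Umat :: "('n::finite \<Rightarrow> real) \<Rightarrow> ('n \<Rightarrow> 'n \<Rightarrow> real) \<Rightarrow> ('n \<Rightarrow> real) \<Rightarrow> ('n \<Rightarrow> real)
    \<Rightarrow> ('n \<Rightarrow> real) \<Rightarrow> real ^ ('n + 'n) ^ ('n + 'n)" where
  "Umat N F beta sig delta = (\<chi> p q.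
     (case (p, q) of
        (Inl i, Inl j) \<Rightarrow> (if i = j then - sig i - gam N F i else 0) + Phi N F i j
      | (Inl i, Inr j) \<Rightarrow> (if i = j then beta i else 0)
      | (Inr i, Inl j) \<Rightarrow> (if i = j then sig i else 0)
      | (Inr i, Inr j) \<Rightarrow> (if i = j then - delta i - gam N F i else 0) + Phi N F i j))"

definition spectral_abscissa :: "real ^ 'm ^ 'm \<Rightarrow> real" where
  "spectral_abscissa M =
     Max {Re z | z. det (mat z - (\<chi> i j. complex_of_real (M $ i $ j))) = 0}"

text \<open>Reduced (e,x,r) vector field obtained by substituting s = 1 - e - x - r.\<close>
definition seirs_field :: "('n::finite \<Rightarrow> real) \<Rightarrow> ('n \<Rightarrow> 'n \<Rightarrow> real) \<Rightarrow> ('n \<Rightarrow> real) \<Rightarrow> ('n \<Rightarrow> real)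
    \<Rightarrow> ('n \<Rightarrow> real) \<Rightarrow> ('n \<Rightarrow> real)
    \<Rightarrow> (real^'n) \<times> (real^'n) \<times> (real^'n) \<Rightarrow> (real^'n) \<times> (real^'n) \<times> (real^'n)" where
  "seirs_field N F alpha beta sig delta = (\<lambda>(e, x, r).
     (\<chi> i. beta i * x $ i * (1 - e $ i - x $ i - r $ i) - (sig i + gam N F i) * e $ i
             + (\<Sum>j\<in>UNIV. Phi N F i j * e $ j),
      \<chi> i. sig i * e $ i - (delta i + gam N F i) * x $ i + (\<Sum>j\<in>UNIV. Phi N F i j * x $ j),
      \<chi> i. delta i * x $ i - (alpha i + gam N F i) * r $ i + (\<Sum>j\<in>UNIV. Phi N F i j * r $ j)))"

definition admissible :: "(real^'n) \<times> (real^'n) \<times> (real^'n) \<Rightarrow> bool" where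
  "admissible = (\<lambda>(e, x, r). \<forall>i. 0 \<le> e $ i \<and> e $ i \<le> 1 \<and> 0 \<le> x $ i \<and> x $ i \<le> 1
       \<and> 0 \<le> r $ i \<and> r $ i \<le> 1 \<and> 0 \<le> 1 - e $ i - x $ i - r $ i \<and> 1 - e $ i - x $ i - r $ i \<le> 1)"

definition loc_exp_stable_origin :: "('a::real_normed_vector \<Rightarrow> 'a) \<Rightarrow> ('a \<Rightarrow> bool) \<Rightarrow> bool" where
  "loc_exp_stable_origin f P \<longleftrightarrow>
     (\<exists>d>0. \<exists>c>0. \<exists>lam>0. \<forall>T\<ge>0. \<forall>y::real \<Rightarrow> 'a.
        ((\<forall>t\<in>{0..T}. (y has_vector_derivative f (y t)) (at t within {0..T}))
          \<and> P (y 0) \<and> norm (y 0) < d)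
        \<longrightarrow> (\<forall>t\<in>{0..T}. norm (y t) \<le> c * exp (- lam * t) * norm (y 0)))"

end

theory Submission
  imports Defs
begin

(*
  The matrix U is Metzler, and s(U) < 0 makes sI - U nonsingular for every s >= 0. The solution
  of w (sI - U) = 1 is nonnegative for large s and, by the Metzler sign pattern, can never reach
  the boundary of the nonnegative orthant; following it down to s = 0 gives w > 0 with w U = -1.

  In the coordinates (e, x, r) the reduced field is a quadratic perturbation of a Metzler linear
  field whose (e, x)-block is U. Giving the recovered compartments the weights eps N_i and using
  sum_i N_i Phi_ij <= N_j gamma_j, all column sums of v J are negative for v = (w, eps N) > 0.
  The weighted l1 norm V(y) = sum_k v_k |y_k| is then a local Lyapunov function: its upper right
  Dini derivative is at most -a V + O(V^2), and a comparison argument gives exponential decay.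
*)

definition charpoly :: "'a::comm_ring_1^'n^'n \<Rightarrow> 'a poly" where
  "charpoly M = (\<Sum>p | p permutes (UNIV::'n set). of_int (sign p) *
      (\<Prod>i\<in>UNIV. if p i = i then [:- M$i$i, 1:] else [:- M$i$p i:]))"

lemma poly_charpoly: "poly (charpoly M) z = det (mat z - M)"
  unfolding charpoly_def det_def
  by (simp add: poly_sum poly_prod mat_def of_int_poly cong: if_cong)
     (rule sum.cong, simp, rule arg_cong[where f="\<lambda>x. _ * x"], rule prod.cong, auto)

lemma finite_UNIV_argmin:
  fixes f :: "'k::finite \<Rightarrow> 'a::linorder"
  obtains k where "\<And>j. f k \<le> f j"
  using ex_is_arg_min_if_finite[of UNIV f] by (auto simp: is_arg_min_def not_less)

lemma matrix_vector_mult_mat_diff_nth: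
  fixes M :: "'a::comm_ring_1^'n^'n"
  shows "((mat z - M) *v x)$k = z * x$k - (\<Sum>j\<in>UNIV. M$k$j * x$j)"
  by (simp add: matrix_vector_mult_def mat_def left_diff_distrib sum_subtractf
      if_distrib[of "\<lambda>a. a * _"] cong: if_cong)

lemma vector_matrix_mult_mat_diff_nth:
  fixes U :: "'a::comm_ring_1^'n^'n"
  shows "(w v* (mat s - U))$j = s * w$j - (\<Sum>i\<in>UNIV. w$i * U$i$j)"
  by (simp add: vector_matrix_mult_def mat_def right_diff_distrib sum_subtractf
      if_distrib[of "\<lambda>a. _ * a"] cong: if_cong)

lemma det_mat_minus_nonzero_large:
  fixes M :: "'a::real_normed_field^'n^'n"
  assumes large: "(\<Sum>i\<in>UNIV. \<Sum>j\<in>UNIV. norm (M$i$j)) < norm z"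
  shows "det (mat z - M) \<noteq> 0"
proof
  assume "det (mat z - M) = 0"
  then obtain x where ker: "(mat z - M) *v x = 0" and "x \<noteq> 0"
    by (metis invertible_det_nz invertible_left_inverse matrix_left_invertible_ker)
  obtain k where k: "\<And>j. norm (x$j) \<le> norm (x$k)"
    using finite_UNIV_argmin[of "\<lambda>j. - norm (x$j)"] by auto
  obtain j where "x$j \<noteq> 0"
    using \<open>x \<noteq> 0\<close> by (metis vec_eq_iff zero_index)
  then have "0 < norm (x$j)"
    by simp
  with k[of j] have "0 < norm (x$k)"
    by linarith
  have "z * x$k = (\<Sum>j\<in>UNIV. M$k$j * x$j)"
    using arg_cong[OF ker, of "\<lambda>y. y$k"] by (simp add: matrix_vector_mult_mat_diff_nth)
  then have "norm z * norm (x$k) = norm (\<Sum>j\<in>UNIV. M$k$j * x$j)"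
    by (metis norm_mult)
  also have "\<dots> \<le> (\<Sum>j\<in>UNIV. norm (M$k$j) * norm (x$k))"
  proof -
    have "norm (M$k$j * x$j) \<le> norm (M$k$j) * norm (x$k)" for j
      unfolding norm_mult by (rule mult_left_mono[OF k norm_ge_zero])
    then have "(\<Sum>j\<in>UNIV. norm (M$k$j * x$j)) \<le> (\<Sum>j\<in>UNIV. norm (M$k$j) * norm (x$k))"
      by (rule sum_mono)
    then show ?thesis
      using norm_sum[of "\<lambda>j. M$k$j * x$j" UNIV] by linarith
  qed
  also have "\<dots> = (\<Sum>j\<in>UNIV. norm (M$k$j)) * norm (x$k)"
    by (simp add: sum_distrib_right)
  also have "\<dots> \<le> (\<Sum>i\<in>UNIV. \<Sum>j\<in>UNIV. norm (M$i$j)) * norm (x$k)"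
    by (rule mult_right_mono[OF member_le_sum]) (simp_all add: sum_nonneg)
  finally show False
    using large \<open>0 < norm (x$k)\<close> by (simp add: mult_le_cancel_right)
qed

lemma finite_eigenvalues:
  fixes M :: "'a::real_normed_field^'n^'n"
  shows "finite {z. det (mat z - M) = 0}"
proof -
  define S where "S = (\<Sum>i\<in>UNIV. \<Sum>j\<in>UNIV. norm (M$i$j))"
  have "0 \<le> S"
    unfolding S_def by (simp add: sum_nonneg)
  then have "S < norm (of_real (S + 1) :: 'a)"
    by (simp only: norm_of_real)
  then have "poly (charpoly M) (of_real (S + 1)) \<noteq> 0"
    unfolding poly_charpoly S_def by (rule det_mat_minus_nonzero_large)
  then have "charpoly M \<noteq> 0"
    by auto
  from poly_roots_finite[OF this] show ?thesis
    unfolding poly_charpoly .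
qed

lemma det_mat_minus_nonzero_above_spectral_abscissa:
  fixes U :: "real^'n^'n"
  assumes "spectral_abscissa U < s"
  shows "det (mat s - U) \<noteq> 0"
proof
  assume "det (mat s - U) = 0"
  define Uc where "Uc = (\<chi> i j. complex_of_real (U$i$j))"
  have "mat (complex_of_real s) - Uc = (\<chi> i j. complex_of_real ((mat s - U)$i$j))"
    by (simp add: Uc_def vec_eq_iff mat_def)
  then have "det (mat (complex_of_real s) - Uc) = of_real (det (mat s - U))"
    by (simp add: det_def of_real_sum of_real_prod)
  with \<open>det (mat s - U) = 0\<close> have "s \<in> Re ` {z. det (mat z - Uc) = 0}"
    by force
  moreover have "{Re z |z. det (mat z - Uc) = 0} = Re ` {z. det (mat z - Uc) = 0}"
    by blast
  ultimately have "s \<le> spectral_abscissa U"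
    unfolding spectral_abscissa_def Uc_def[symmetric]
    by (simp add: finite_eigenvalues)
  with assms show False
    by simp
qed

lemma continuous_on_det:
  fixes A :: "'a::topological_space \<Rightarrow> real^'n^'n"
  assumes "\<And>i j. continuous_on S (\<lambda>s. A s $ i $ j)"
  shows "continuous_on S (\<lambda>s. det (A s))"
  unfolding det_def by (intro continuous_intros assms)

lemma continuous_on_linear_solution:
  fixes A :: "'a::topological_space \<Rightarrow> real^'n^'n"
  assumes cont: "\<And>i j. continuous_on S (\<lambda>s. A s $ i $ j)"
    and nonsing: "\<And>s. s \<in> S \<Longrightarrow> det (A s) \<noteq> 0"
    and sol: "\<And>s. s \<in> S \<Longrightarrow> A s *v x s = b"
  shows "continuous_on S (\<lambda>s. x s $ k)"
proof -
  have "continuous_on S (\<lambda>s. if j = k then b$i else A s $ i $ j)" for i j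
    by (cases "j = k") (simp_all add: cont)
  then have "continuous_on S (\<lambda>s. det (\<chi> i j. if j = k then b$i else A s $ i $ j))"
    by (intro continuous_on_det) simp
  then have formula_cont:
      "continuous_on S (\<lambda>s. det (\<chi> i j. if j = k then b$i else A s $ i $ j) / det (A s))"
    by (rule continuous_on_divide[OF _ continuous_on_det[OF cont]]) (use nonsing in auto)
  have "det (\<chi> i j. if j = k then b$i else A s $ i $ j) / det (A s) = x s $ k" if "s \<in> S" for s
    using sol[OF that] cramer[OF nonsing[OF that]] by simp
  then show ?thesis
    by (rule continuous_on_eq[OF formula_cont])
qed

lemma continuous_on_Min_finite:
  fixes f :: "'k \<Rightarrow> 'a::topological_space \<Rightarrow> real"
  assumes "finite K" "K \<noteq> {}" "\<And>k. k \<in> K \<Longrightarrow> continuous_on S (f k)"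
  shows "continuous_on S (\<lambda>s. Min ((\<lambda>k. f k s) ` K))"
  using assms
proof (induction K rule: finite_ne_induct)
  case (insert k K)
  then have "continuous_on S (\<lambda>s. min (f k s) (Min ((\<lambda>k. f k s) ` K)))"
    by (intro continuous_intros) auto
  with insert show ?case
    by simp
qed simp

definition metzler :: "real^'n^'n \<Rightarrow> bool" where
  "metzler U \<longleftrightarrow> (\<forall>i j. i \<noteq> j \<longrightarrow> 0 \<le> U$i$j)"

lemma metzler_left_solution_pos:
  fixes U :: "real^'n^'n"
  assumes "metzler U" and sol: "w v* (mat s - U) = 1" and nonneg: "\<And>i. 0 \<le> w$i"
  shows "0 < w$j"
proof -
  have "1 = s * w$j - (\<Sum>i\<in>UNIV. w$i * U$i$j)"
    using arg_cong[OF sol, of "\<lambda>u. u$j"] by (simp add: vector_matrix_mult_mat_diff_nth)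
  also have "\<dots> = (s - U$j$j) * w$j - (\<Sum>i\<in>UNIV - {j}. w$i * U$i$j)"
    by (simp add: sum.remove[of UNIV j] algebra_simps)
  also have "\<dots> \<le> (s - U$j$j) * w$j"
    using assms(1) nonneg unfolding metzler_def by (fastforce intro!: sum_nonneg mult_nonneg_nonneg)
  finally have "w$j \<noteq> 0"
    by auto
  with nonneg show ?thesis
    by (simp add: order_less_le)
qed

lemma metzler_left_solution_nonneg_large:
  fixes U :: "real^'n^'n"
  assumes "metzler U" and large: "(\<Sum>i\<in>UNIV. \<Sum>j\<in>UNIV. \<bar>U$i$j\<bar>) < s"
    and sol: "w v* (mat s - U) = 1"
  shows "0 \<le> w$j"
proof (rule ccontr)
  obtain k where min: "\<And>i. w$k \<le> w$i"
    using finite_UNIV_argmin[of "\<lambda>i. w$i"] by blast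
  assume "\<not> 0 \<le> w$j"
  with min[of j] have "w$k < 0"
    by linarith
  have "1 = s * w$k - (\<Sum>i\<in>UNIV. w$i * U$i$k)"
    using arg_cong[OF sol, of "\<lambda>u. u$k"] by (simp add: vector_matrix_mult_mat_diff_nth)
  also have "\<dots> \<le> s * w$k - (\<Sum>i\<in>UNIV. w$k * U$i$k)"
  proof -
    have "w$k * U$i$k \<le> w$i * U$i$k" for i
      using \<open>metzler U\<close> min[of i] unfolding metzler_def
      by (cases "i = k") (auto intro: mult_right_mono)
    then show ?thesis
      by (simp add: sum_mono)
  qed
  also have "\<dots> = (s - (\<Sum>i\<in>UNIV. U$i$k)) * w$k"
    by (simp add: sum_distrib_left algebra_simps)
  also have "\<dots> < 0"
  proof (rule mult_pos_neg)
    have "U$i$k \<le> (\<Sum>j\<in>UNIV. \<bar>U$i$j\<bar>)" for i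
      using member_le_sum[of k UNIV "\<lambda>j. \<bar>U$i$j\<bar>"] by simp
    then have "(\<Sum>i\<in>UNIV. U$i$k) \<le> (\<Sum>i\<in>UNIV. \<Sum>j\<in>UNIV. \<bar>U$i$j\<bar>)"
      by (rule sum_mono)
    with large show "0 < s - (\<Sum>i\<in>UNIV. U$i$k)"
      by linarith
  qed (fact \<open>w$k < 0\<close>)
  finally show False
    by simp
qed

(* The smallest entry of w s is continuous, nonnegative for large s, and never 0 because a
   nonnegative solution is positive; hence it stays positive down to s = 0. *)
lemma metzler_left_solution_path_nonneg:
  fixes U :: "real^'n^'n" and w :: "real \<Rightarrow> real^'n"
  assumes "metzler U"
    and sol: "\<And>s. 0 \<le> s \<Longrightarrow> w s v* (mat s - U) = 1"
    and cont: "\<And>k. continuous_on {0..} (\<lambda>s. w s $ k)"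
  shows "0 \<le> w 0 $ k"
proof (rule ccontr)
  assume "\<not> 0 \<le> w 0 $ k"
  define S where "S = 1 + (\<Sum>i\<in>UNIV. \<Sum>j\<in>UNIV. \<bar>U$i$j\<bar>)"
  have "0 \<le> S"
    by (simp add: S_def add_nonneg_nonneg sum_nonneg)
  define m where "m s = Min (range (\<lambda>k. w s $ k))" for s
  have m_le: "m s \<le> w s $ k" for s k
    unfolding m_def by (rule Min_le) auto
  have m_attained: "\<exists>k. m s = w s $ k" for s
  proof -
    have "m s \<in> range (\<lambda>k. w s $ k)"
      unfolding m_def by (rule Min_in) auto
    then show ?thesis
      by auto
  qed
  have "continuous_on {0..S} (\<lambda>s. w s $ k)" for k
    by (rule continuous_on_subset[OF cont]) auto
  then have "continuous_on {0..S} m"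
    unfolding m_def by (intro continuous_on_Min_finite) auto
  moreover have "0 \<le> m S"
    using m_attained[of S] \<open>0 \<le> S\<close> metzler_left_solution_nonneg_large[OF assms(1) _ sol]
    by (force simp: S_def)
  moreover have "m 0 \<le> 0"
    using m_le[of 0 k] \<open>\<not> 0 \<le> w 0 $ k\<close> by linarith
  ultimately obtain s where s: "0 \<le> s" "m s = 0"
    using IVT'[of m 0 0 S] \<open>0 \<le> S\<close> by auto
  then have "0 \<le> w s $ i" for i
    using m_le[of s i] by simp
  then have "0 < w s $ j" for j
    by (rule metzler_left_solution_pos[OF assms(1) sol[OF s(1)]])
  moreover obtain j where "m s = w s $ j"
    using m_attained by blast
  ultimately show False
    using s(2) by (metis less_irrefl)
qed

lemma metzler_pos_left_vector:
  fixes U :: "real^'n^'n"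
  assumes "metzler U" and nonsing: "\<And>s. 0 \<le> s \<Longrightarrow> det (mat s - U) \<noteq> 0"
  shows "\<exists>w. (\<forall>j. 0 < w$j) \<and> w v* U = - 1"
proof -
  define A where "A s = transpose (mat s - U)" for s
  have nonsing_A: "det (A s) \<noteq> 0" if "0 \<le> s" for s
    using nonsing[OF that] by (simp add: A_def det_transpose)
  have "\<forall>s. \<exists>w. 0 \<le> s \<longrightarrow> A s *v w = 1"
    using cramer[OF nonsing_A] by blast
  then obtain w where sol_A: "\<And>s. 0 \<le> s \<Longrightarrow> A s *v w s = 1"
    by metis
  then have sol: "w s v* (mat s - U) = 1" if "0 \<le> s" for s
    using that by (simp add: A_def)
  have "continuous_on {0..} (\<lambda>s. A s $ i $ j)" for i j
    by (cases "i = j") (simp_all add: A_def transpose_def mat_def continuous_intros)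
  then have "continuous_on {0..} (\<lambda>s. w s $ k)" for k
    by (rule continuous_on_linear_solution) (use nonsing_A sol_A in auto)
  then have "0 \<le> w 0 $ k" for k
    using metzler_left_solution_path_nonneg[of U w, OF assms(1) sol] by blast
  then have "0 < w 0 $ j" for j
    by (rule metzler_left_solution_pos[OF assms(1) sol[of 0], simplified])
  moreover have "w 0 v* U = - 1"
    using sol[of 0] unfolding vector_matrix_mult_diff_rdistrib by (simp add: minus_equation_iff)
  ultimately show ?thesis
    by blast
qed

(* First-crossing argument at t1 = Inf {s. 0 < g s}. *)
lemma nonpos_on_Icc_if_right_descent:
  fixes g :: "real \<Rightarrow> real"
  assumes cont: "continuous_on {a..b} g" and start: "g a < 0"
    and descent: "\<And>t. t \<in> {a..<b} \<Longrightarrow> g t = 0 \<Longrightarrow> eventually (\<lambda>s. g s < 0) (at_right t)"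
    and t: "t \<in> {a..b}"
  shows "g t \<le> 0"
proof (rule ccontr)
  assume "\<not> g t \<le> 0"
  define A where "A = {s \<in> {a..b}. 0 < g s}"
  define t1 where "t1 = Inf A"
  have "t \<in> A"
    using t \<open>\<not> g t \<le> 0\<close> by (simp add: A_def)
  have bdd: "bdd_below A"
    by (rule bdd_belowI[of _ a]) (simp add: A_def)
  then have lower: "t1 \<le> s" if "s \<in> A" for s
    using that by (simp add: t1_def cInf_lower)
  have closed_nonneg: "closed ({a..b} \<inter> g -` {0..})" and closed_nonpos: "closed ({a..b} \<inter> g -` {..0})"
    by (simp_all add: continuous_closed_preimage cont)
  have "t1 \<in> closure A"
    unfolding t1_def using \<open>t \<in> A\<close> bdd by (intro closure_contains_Inf) auto
  also have "closure A \<subseteq> {a..b} \<inter> g -` {0..}"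
    by (rule closure_minimal[OF _ closed_nonneg]) (auto simp: A_def)
  finally have t1: "a \<le> t1" "t1 \<le> b" "0 \<le> g t1"
    by auto
  have "a < t1"
    using t1 start by (cases "a = t1") auto
  have "{a..<t1} \<subseteq> {a..b} \<inter> g -` {..0}"
    using lower t1 by (force simp: A_def)
  then have "closure {a..<t1} \<subseteq> {a..b} \<inter> g -` {..0}"
    by (rule closure_minimal[OF _ closed_nonpos])
  moreover have "t1 \<in> closure {a..<t1}"
    using \<open>a < t1\<close> by simp
  ultimately have "g t1 = 0"
    using t1(3) by force
  have "t1 < b"
    using lower[OF \<open>t \<in> A\<close>] \<open>t \<in> A\<close> \<open>g t1 = 0\<close> t1(2) by (cases "t1 = b") (auto simp: A_def)
  then obtain h where "t1 < h" and neg: "\<And>s. t1 < s \<Longrightarrow> s < h \<Longrightarrow> g s < 0"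
    using descent[of t1] t1 \<open>g t1 = 0\<close> by (auto simp: eventually_at_right_field)
  have "h \<le> s" if "s \<in> A" for s
    using lower[OF that] neg[of s] that \<open>g t1 = 0\<close> by (force simp: A_def)
  then have "h \<le> t1"
    unfolding t1_def using \<open>t \<in> A\<close> by (intro cInf_greatest) auto
  with \<open>t1 < h\<close> show False
    by simp
qed

lemma exp_bound_if_right_dini_bound:
  fixes V :: "real \<Rightarrow> real"
  assumes cont: "continuous_on {0..T} V" and rates: "0 < b" "b < c"
    and E: "0 \<le> V 0" "V 0 < E" "E \<le> R"
    and dini: "\<And>t \<eta>. t \<in> {0..<T} \<Longrightarrow> V t \<le> R \<Longrightarrow> 0 < \<eta> \<Longrightarrow>
      eventually (\<lambda>s. V s \<le> V t - (s - t) * (c * V t - \<eta>)) (at_right t)"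
    and t: "t \<in> {0..T}"
  shows "V t \<le> E * exp (- b * t)"
proof -
  define g where "g s = V s - E * exp (- b * s)" for s
  have "g t \<le> 0"
  proof (rule nonpos_on_Icc_if_right_descent[OF _ _ _ t])
    show "continuous_on {0..T} g"
      unfolding g_def by (intro continuous_intros cont)
    show "g 0 < 0"
      using E by (simp add: g_def)
    fix t'
    assume t': "t' \<in> {0..<T}" and "g t' = 0"
    define p where "p = E * exp (- b * t')"
    have "V t' = p" and "0 < p"
      using \<open>g t' = 0\<close> E by (simp_all add: g_def p_def)
    moreover have "p \<le> E"
      using t' rates E by (simp add: p_def mult_le_cancel_left1)
    \<comment> \<open>the slack \<open>\<eta> = (c - b) * p / 2\<close> makes the crossing strict\<close>
    ultimately have "eventually (\<lambda>s. V s \<le> p - (s - t') * (c * p - (c - b) * p / 2)) (at_right t')"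
      using dini[OF t'] rates E by simp
    then show "eventually (\<lambda>s. g s < 0) (at_right t')"
      using eventually_at_right_less[of t']
    proof eventually_elim
      case (elim s)
      have "p * (1 - b * (s - t')) \<le> p * exp (- b * (s - t'))"
        using \<open>0 < p\<close> exp_ge_add_one_self[of "- b * (s - t')"] by (simp add: mult_left_mono)
      also have "p * exp (- b * (s - t')) = E * exp (- b * s)"
        by (simp add: p_def mult_exp_exp algebra_simps)
      finally have "p * (1 - b * (s - t')) \<le> E * exp (- b * s)" .
      moreover have "0 < (s - t') * ((c - b) * p / 2)"
        using elim(2) rates \<open>0 < p\<close> by simp
      moreover have "p - (s - t') * (c * p - (c - b) * p / 2)
          = p * (1 - b * (s - t')) - (s - t') * ((c - b) * p / 2)"
        by (simp add: algebra_simps)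
      ultimately show ?case
        using elim(1) by (simp add: g_def)
    qed
  qed
  then show ?thesis
    by (simp add: g_def)
qed

lemma exp_decay_if_right_dini_bound:
  fixes V :: "real \<Rightarrow> real"
  assumes "continuous_on {0..T} V" and "0 < b" "b < c"
    and V0: "0 \<le> V 0" "V 0 < R"
    and "\<And>t \<eta>. t \<in> {0..<T} \<Longrightarrow> V t \<le> R \<Longrightarrow> 0 < \<eta> \<Longrightarrow>
      eventually (\<lambda>s. V s \<le> V t - (s - t) * (c * V t - \<eta>)) (at_right t)"
    and "t \<in> {0..T}"
  shows "V t \<le> V 0 * exp (- b * t)"
proof -
  have "V t \<le> E * exp (- b * t)" if "V 0 < E" "E < R" for E
    using that assms by (intro exp_bound_if_right_dini_bound[where R = R]) auto
  then have "V t * exp (b * t) \<le> V 0"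
    by (intro dense_ge_bounded[OF V0(2)]) (simp add: exp_minus field_simps)
  then show ?thesis
    by (simp add: exp_minus field_simps)
qed

lemma abs_add_mult_le:
  fixes z z' l h :: real
  assumes "0 \<le> h" and "0 \<le> 1 + h * l"
  shows "\<bar>z + h * z'\<bar> \<le> \<bar>z\<bar> + h * (\<bar>z' - l * z\<bar> + l * \<bar>z\<bar>)"
proof -
  have "\<bar>z + h * z'\<bar> = \<bar>(1 + h * l) * z + h * (z' - l * z)\<bar>"
    by (simp add: algebra_simps)
  also have "\<dots> \<le> \<bar>(1 + h * l) * z\<bar> + \<bar>h * (z' - l * z)\<bar>"
    by (rule abs_triangle_ineq)
  also have "\<dots> = (1 + h * l) * \<bar>z\<bar> + h * \<bar>z' - l * z\<bar>"
    using assms by (simp add: abs_mult)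
  also have "\<dots> = \<bar>z\<bar> + h * (\<bar>z' - l * z\<bar> + l * \<bar>z\<bar>)"
    by (simp add: algebra_simps)
  finally show ?thesis .
qed

lemma abs_right_increment_bound:
  fixes z :: "real \<Rightarrow> real"
  assumes deriv: "(z has_real_derivative z') (at_right t)" and "0 < \<eta>"
  shows "eventually (\<lambda>s. \<bar>z s\<bar> \<le> \<bar>z t\<bar> + (s - t) * (\<bar>z' - l * z t\<bar> + l * \<bar>z t\<bar> + \<eta>)) (at_right t)"
proof -
  have "((\<lambda>s. (z s - z t) / (s - t)) \<longlongrightarrow> z') (at_right t)"
    using deriv by (simp add: has_field_derivative_iff)
  from tendstoD[OF this \<open>0 < \<eta>\<close>]
  have "eventually (\<lambda>s. \<bar>(z s - z t) / (s - t) - z'\<bar> < \<eta>) (at_right t)"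
    by (simp add: dist_real_def)
  moreover have "eventually (\<lambda>s. s < t + 1 / (\<bar>l\<bar> + 1)) (at_right t)"
    by (rule order_tendstoD(2)[OF tendsto_ident_at]) (simp add: add_pos_nonneg)
  ultimately show ?thesis
    using eventually_at_right_less[of t]
  proof eventually_elim
    case (elim s)
    define h where "h = s - t"
    have "0 < h" "h * \<bar>l\<bar> < 1"
      using elim(2,3) by (simp_all add: h_def field_simps)
    moreover have "h * - \<bar>l\<bar> \<le> h * l"
      using \<open>0 < h\<close> by (intro mult_left_mono) auto
    ultimately have "0 \<le> 1 + h * l"
      by simp
    have "z s - z t - h * z' = ((z s - z t) / h - z') * h"
      using \<open>0 < h\<close> by (simp add: field_simps)
    then have "\<bar>z s - z t - h * z'\<bar> = \<bar>(z s - z t) / h - z'\<bar> * h"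
      using \<open>0 < h\<close> by (simp add: abs_mult)
    also have "\<dots> < \<eta> * h"
      using elim(1) \<open>0 < h\<close> by (simp add: h_def)
    finally have "\<bar>z s - z t - h * z'\<bar> < \<eta> * h" .
    moreover have "\<bar>z t + h * z'\<bar> \<le> \<bar>z t\<bar> + h * (\<bar>z' - l * z t\<bar> + l * \<bar>z t\<bar>)"
      using \<open>0 < h\<close> \<open>0 \<le> 1 + h * l\<close> by (intro abs_add_mult_le) auto
    moreover have "\<bar>z s\<bar> \<le> \<bar>z t + h * z'\<bar> + \<bar>z s - z t - h * z'\<bar>"
      using abs_triangle_ineq[of "z t + h * z'" "z s - z t - h * z'"] by simp
    ultimately show ?case
      using \<open>\<bar>z s - z t - h * z'\<bar> < \<eta> * h\<close> by (simp add: h_def algebra_simps)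
  qed
qed

locale copositive_linearization =
  fixes f :: "'a::real_normed_vector \<Rightarrow> 'a"
    and coord :: "'a \<Rightarrow> 'k::finite \<Rightarrow> real"
    and L :: "'k \<Rightarrow> 'k \<Rightarrow> real" and K :: real and v :: "'k \<Rightarrow> real"
  assumes bounded_linear_coord: "bounded_linear (\<lambda>Y. coord Y k)"
    and norm_le_sum_abs_coord: "norm Y \<le> (\<Sum>k\<in>UNIV. \<bar>coord Y k\<bar>)"
    and abs_coord_le_norm: "\<bar>coord Y k\<bar> \<le> norm Y"
    and remainder_quadratic:
      "\<bar>coord (f Y) k - (\<Sum>j\<in>UNIV. L k j * coord Y j)\<bar> \<le> K * (\<Sum>j\<in>UNIV. \<bar>coord Y j\<bar>)\<^sup>2"
    and K_nonneg: "0 \<le> K"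
    and L_offdiag_nonneg: "k \<noteq> j \<Longrightarrow> 0 \<le> L k j"
    and v_pos: "0 < v k"
    and v_L_neg: "(\<Sum>k\<in>UNIV. v k * L k j) < 0"
begin

definition coord_l1 :: "'a \<Rightarrow> real" where
  "coord_l1 Y = (\<Sum>k\<in>UNIV. \<bar>coord Y k\<bar>)"

definition lyap :: "'a \<Rightarrow> real" where
  "lyap Y = (\<Sum>k\<in>UNIV. v k * \<bar>coord Y k\<bar>)"

(* Bound for the upper right Dini derivative of lyap along f (see abs_right_increment_bound);
   the diagonal of L, which may be negative, is split off. *)
definition lyap_drift :: "'a \<Rightarrow> real" where
  "lyap_drift Y = (\<Sum>k\<in>UNIV. v k * (\<bar>coord (f Y) k - L k k * coord Y k\<bar> + L k k * \<bar>coord Y k\<bar>))"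

definition rate :: real where
  "rate = Min (range (\<lambda>j. - (\<Sum>k\<in>UNIV. v k * L k j) / v j))"

definition v_min :: real where
  "v_min = Min (range v)"

definition v_sum :: real where
  "v_sum = (\<Sum>k\<in>UNIV. v k)"

lemma rate_pos: "0 < rate"
proof -
  have "rate \<in> range (\<lambda>j. - (\<Sum>k\<in>UNIV. v k * L k j) / v j)"
    unfolding rate_def by (rule Min_in) auto
  then obtain j where "rate = - (\<Sum>k\<in>UNIV. v k * L k j) / v j"
    by blast
  then show ?thesis
    using v_L_neg[of j] v_pos[of j] by (simp add: divide_neg_pos)
qed

lemma v_L_le_rate: "(\<Sum>k\<in>UNIV. v k * L k j) \<le> - rate * v j"
proof -
  have "rate \<le> - (\<Sum>k\<in>UNIV. v k * L k j) / v j"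
    unfolding rate_def by (rule Min_le) auto
  then show ?thesis
    using v_pos[of j] by (simp add: field_simps)
qed

lemma v_min_pos: "0 < v_min"
  using Min_in[of "range v"] v_pos by (auto simp: v_min_def)

lemma v_sum_pos: "0 < v_sum"
  unfolding v_sum_def by (simp add: sum_pos v_pos)

lemma coord_l1_nonneg: "0 \<le> coord_l1 Y"
  unfolding coord_l1_def by (simp add: sum_nonneg)

lemma lyap_nonneg: "0 \<le> lyap Y"
  unfolding lyap_def by (simp add: sum_nonneg v_pos less_imp_le)

lemma coord_l1_le_lyap: "v_min * coord_l1 Y \<le> lyap Y"
  unfolding coord_l1_def lyap_def sum_distrib_left v_min_def
  by (intro sum_mono mult_right_mono) auto

lemma norm_le_lyap: "v_min * norm Y \<le> lyap Y"
proof -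
  have "v_min * norm Y \<le> v_min * coord_l1 Y"
    unfolding coord_l1_def using norm_le_sum_abs_coord v_min_pos by (simp add: mult_left_mono)
  then show ?thesis
    using coord_l1_le_lyap by (rule order_trans)
qed

lemma lyap_le_norm: "lyap Y \<le> v_sum * norm Y"
  unfolding lyap_def v_sum_def sum_distrib_right
  by (intro sum_mono mult_left_mono abs_coord_le_norm) (simp add: v_pos less_imp_le)

lemma continuous_on_lyap: "continuous_on S y \<Longrightarrow> continuous_on S (\<lambda>t. lyap (y t))"
  unfolding lyap_def
  by (intro continuous_intros bounded_linear.continuous_on[OF bounded_linear_coord])

lemma lyap_drift_le: "lyap_drift Y \<le> - rate * lyap Y + v_sum * K * (coord_l1 Y)\<^sup>2"
proof -
  let ?R = "K * (coord_l1 Y)\<^sup>2"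
  have row: "\<bar>coord (f Y) k - L k k * coord Y k\<bar> + L k k * \<bar>coord Y k\<bar>
      \<le> (\<Sum>j\<in>UNIV. L k j * \<bar>coord Y j\<bar>) + ?R" for k
  proof -
    have "coord (f Y) k - L k k * coord Y k
        = (\<Sum>j\<in>UNIV - {k}. L k j * coord Y j) + (coord (f Y) k - (\<Sum>j\<in>UNIV. L k j * coord Y j))"
      by (simp add: sum.remove[of UNIV k])
    then have "\<bar>coord (f Y) k - L k k * coord Y k\<bar>
        \<le> \<bar>\<Sum>j\<in>UNIV - {k}. L k j * coord Y j\<bar> + \<bar>coord (f Y) k - (\<Sum>j\<in>UNIV. L k j * coord Y j)\<bar>"
      by (metis abs_triangle_ineq)
    also have "\<dots> \<le> (\<Sum>j\<in>UNIV - {k}. L k j * \<bar>coord Y j\<bar>) + ?R"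
      using remainder_quadratic[of Y k] L_offdiag_nonneg
      by (intro add_mono order_trans[OF sum_abs] sum_mono) (auto simp: abs_mult coord_l1_def)
    finally show ?thesis
      by (simp add: sum.remove[of UNIV k])
  qed
  have "lyap_drift Y \<le> (\<Sum>k\<in>UNIV. v k * ((\<Sum>j\<in>UNIV. L k j * \<bar>coord Y j\<bar>) + ?R))"
    unfolding lyap_drift_def by (intro sum_mono mult_left_mono row) (simp add: v_pos less_imp_le)
  also have "\<dots> = (\<Sum>k\<in>UNIV. \<Sum>j\<in>UNIV. v k * L k j * \<bar>coord Y j\<bar>) + v_sum * ?R"
    by (simp add: v_sum_def distrib_left sum.distrib sum_distrib_left sum_distrib_right mult.assoc)
  also have "\<dots> = (\<Sum>j\<in>UNIV. (\<Sum>k\<in>UNIV. v k * L k j) * \<bar>coord Y j\<bar>) + v_sum * ?R"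
    by (subst sum.swap) (simp add: sum_distrib_right)
  also have "\<dots> \<le> (\<Sum>j\<in>UNIV. (- rate * v j) * \<bar>coord Y j\<bar>) + v_sum * ?R"
    by (rule add_right_mono[OF sum_mono[OF mult_right_mono[OF v_L_le_rate abs_ge_zero]]])
  also have "\<dots> = - rate * lyap Y + v_sum * K * (coord_l1 Y)\<^sup>2"
    by (simp add: lyap_def sum_distrib_left mult.assoc)
  finally show ?thesis .
qed

definition radius :: real where
  "radius = rate * v_min\<^sup>2 / (2 * (v_sum * K + 1))"

lemma radius_pos: "0 < radius"
  unfolding radius_def using rate_pos v_min_pos v_sum_pos K_nonneg
  by (intro divide_pos_pos mult_pos_pos) (simp_all add: add_nonneg_pos)

lemma radius_coefficient_le: "v_sum * K * radius / v_min\<^sup>2 \<le> rate / 2"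
proof -
  define q where "q = v_sum * K + 1"
  have "0 < q" and "v_sum * K / q \<le> 1"
    using v_sum_pos K_nonneg by (simp_all add: q_def add_nonneg_pos)
  have "v_sum * K * radius / v_min\<^sup>2 = (rate / 2) * (v_sum * K / q)"
    using \<open>0 < q\<close> v_min_pos unfolding radius_def q_def[symmetric] by (simp add: field_simps)
  also have "\<dots> \<le> rate / 2"
    using mult_left_le[OF \<open>v_sum * K / q \<le> 1\<close>, of "rate / 2"] rate_pos by simp
  finally show ?thesis .
qed

lemma lyap_drift_le_half_rate:
  assumes "lyap Y \<le> radius"
  shows "lyap_drift Y \<le> - (rate / 2) * lyap Y"
proof -
  have "coord_l1 Y \<le> lyap Y / v_min"
    using coord_l1_le_lyap[of Y] v_min_pos by (simp add: field_simps)
  then have "v_sum * K * (coord_l1 Y)\<^sup>2 \<le> v_sum * K * (lyap Y / v_min)\<^sup>2"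
    using v_sum_pos K_nonneg by (simp add: mult_left_mono power_mono coord_l1_nonneg)
  also have "\<dots> = (v_sum * K * lyap Y / v_min\<^sup>2) * lyap Y"
    by (simp add: power2_eq_square)
  also have "\<dots> \<le> (v_sum * K * radius / v_min\<^sup>2) * lyap Y"
    using assms v_sum_pos K_nonneg
    by (simp add: mult_right_mono[OF _ lyap_nonneg] divide_right_mono mult_left_mono)
  also have "\<dots> \<le> (rate / 2) * lyap Y"
    by (rule mult_right_mono[OF radius_coefficient_le lyap_nonneg])
  finally show ?thesis
    using lyap_drift_le[of Y] by simp
qed

lemma lyap_right_increment:
  assumes "(y has_vector_derivative f (y t)) (at_right t)" and "0 < \<eta>"
  shows "eventually (\<lambda>s. lyap (y s) \<le> lyap (y t) + (s - t) * (lyap_drift (y t) + \<eta>)) (at_right t)"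
proof -
  define D where "D k = \<bar>coord (f (y t)) k - L k k * coord (y t) k\<bar> + L k k * \<bar>coord (y t) k\<bar>" for k
  have "((\<lambda>s. coord (y s) k) has_real_derivative coord (f (y t)) k) (at_right t)" for k
    using bounded_linear.has_vector_derivative[OF bounded_linear_coord assms(1)]
    by (simp add: has_real_derivative_iff_has_vector_derivative)
  then have "eventually (\<lambda>s. \<forall>k. \<bar>coord (y s) k\<bar> \<le> \<bar>coord (y t) k\<bar> + (s - t) * (D k + \<eta> / v_sum))
      (at_right t)"
    unfolding D_def using assms(2) v_sum_pos
    by (intro eventually_all_finite abs_right_increment_bound) simp_all
  then show ?thesis
    using eventually_at_right_less[of t]
  proof eventually_elim
    case (elim s)
    have "lyap (y s) \<le> (\<Sum>k\<in>UNIV. v k * (\<bar>coord (y t) k\<bar> + (s - t) * (D k + \<eta> / v_sum)))"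
      unfolding lyap_def using elim(1) by (intro sum_mono mult_left_mono) (auto simp: v_pos less_imp_le)
    also have "\<dots> = (\<Sum>k\<in>UNIV. v k * \<bar>coord (y t) k\<bar> + (s - t) * (v k * D k) + ((s - t) * (\<eta> / v_sum)) * v k)"
      by (intro sum.cong) (simp_all add: algebra_simps)
    also have "\<dots> = lyap (y t) + (s - t) * lyap_drift (y t) + ((s - t) * (\<eta> / v_sum)) * v_sum"
      by (simp add: sum.distrib sum_distrib_left lyap_def lyap_drift_def D_def v_sum_def)
    also have "\<dots> = lyap (y t) + (s - t) * (lyap_drift (y t) + \<eta>)"
      using v_sum_pos by (simp add: field_simps)
    finally show ?case .
  qed
qed

lemma lyap_right_dini_bound:
  assumes "(y has_vector_derivative f (y t)) (at_right t)" and "lyap (y t) \<le> radius" and "0 < \<eta>"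
  shows "eventually (\<lambda>s. lyap (y s) \<le> lyap (y t) - (s - t) * (rate / 2 * lyap (y t) - \<eta>)) (at_right t)"
  using lyap_right_increment[OF assms(1,3)] eventually_at_right_less[of t]
proof eventually_elim
  case (elim s)
  have "(s - t) * lyap_drift (y t) \<le> (s - t) * (- (rate / 2) * lyap (y t))"
    using elim(2) lyap_drift_le_half_rate[OF assms(2)] by (intro mult_left_mono) auto
  with elim(1) show ?case
    by (simp add: algebra_simps)
qed

lemma lyap_exp_decay:
  assumes deriv: "\<And>t. t \<in> {0..T} \<Longrightarrow> (y has_vector_derivative f (y t)) (at t within {0..T})"
    and "lyap (y 0) < radius" and "t \<in> {0..T}"
  shows "lyap (y t) \<le> lyap (y 0) * exp (- (rate / 4) * t)"
proof (rule exp_decay_if_right_dini_bound[where V = "\<lambda>t. lyap (y t)" and R = radius])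
  have "continuous_on {0..T} y"
    unfolding continuous_on_eq_continuous_within using deriv has_vector_derivative_continuous by blast
  then show "continuous_on {0..T} (\<lambda>t. lyap (y t))"
    by (rule continuous_on_lyap)
  show "0 < rate / 4" "rate / 4 < rate / 2"
    using rate_pos by simp_all
  show "0 \<le> lyap (y 0)" "lyap (y 0) < radius" "t \<in> {0..T}"
    by (fact lyap_nonneg assms(2,3))+
  fix t' \<eta> :: real
  assume t': "t' \<in> {0..<T}" and "lyap (y t') \<le> radius" and "0 < \<eta>"
  have "(y has_vector_derivative f (y t')) (at t' within {t'..T})"
    using t' by (intro has_vector_derivative_within_subset[OF deriv]) auto
  then have "(y has_vector_derivative f (y t')) (at_right t')"
    using t' by (simp add: at_within_Icc_at_right)
  then show "eventually (\<lambda>s. lyap (y s) \<le> lyap (y t') - (s - t') * (rate / 2 * lyap (y t') - \<eta>))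
      (at_right t')"
    using \<open>lyap (y t') \<le> radius\<close> \<open>0 < \<eta>\<close> by (rule lyap_right_dini_bound)
qed

theorem loc_exp_stable_origin: "loc_exp_stable_origin f P"
  unfolding loc_exp_stable_origin_def
proof (intro exI conjI allI impI ballI)
  show "0 < radius / v_sum" "0 < v_sum / v_min" "0 < rate / 4"
    using radius_pos v_sum_pos v_min_pos rate_pos by simp_all
  fix T :: real and y :: "real \<Rightarrow> 'a" and t
  assume "(\<forall>t\<in>{0..T}. (y has_vector_derivative f (y t)) (at t within {0..T}))
      \<and> P (y 0) \<and> norm (y 0) < radius / v_sum"
  then have deriv: "\<And>t. t \<in> {0..T} \<Longrightarrow> (y has_vector_derivative f (y t)) (at t within {0..T})"
    and small: "norm (y 0) < radius / v_sum"
    by auto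
  assume "t \<in> {0..T}"
  have "lyap (y 0) < radius"
    using lyap_le_norm[of "y 0"] small v_sum_pos by (simp add: field_simps)
  have "norm (y t) \<le> lyap (y t) / v_min"
    using norm_le_lyap[of "y t"] v_min_pos by (simp add: field_simps)
  also have "\<dots> \<le> lyap (y 0) * exp (- (rate / 4) * t) / v_min"
    using lyap_exp_decay[OF deriv \<open>lyap (y 0) < radius\<close> \<open>t \<in> {0..T}\<close>] v_min_pos
    by (simp add: divide_right_mono)
  also have "\<dots> \<le> v_sum * norm (y 0) * exp (- (rate / 4) * t) / v_min"
    using lyap_le_norm[of "y 0"] v_min_pos by (intro divide_right_mono mult_right_mono) auto
  finally show "norm (y t) \<le> v_sum / v_min * exp (- (rate / 4) * t) * norm (y 0)"
    by (simp add: field_simps)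
qed

end

lemma sum_UNIV_Plus:
  "(\<Sum>k\<in>(UNIV::('a::finite + 'b::finite) set). g k) = (\<Sum>i\<in>UNIV. g (Inl i)) + (\<Sum>j\<in>UNIV. g (Inr j))"
  by (simp add: UNIV_Plus_UNIV[symmetric] sum.Plus del: UNIV_Plus_UNIV)

lemma gam_nonneg:
  assumes "\<And>i. 0 < N i" and "\<And>i j. 0 \<le> F i j"
  shows "0 \<le> gam N F j"
  unfolding gam_def using assms by (simp add: sum_nonneg less_imp_le)

lemma Phi_nonneg:
  assumes "\<And>i. 0 < N i" and "\<And>i j. 0 \<le> F i j"
  shows "0 \<le> Phi N F i j"
proof -
  have "0 \<le> wgt F i j"
    unfolding wgt_def using assms(2) by (simp add: sum_nonneg)
  then show ?thesis
    unfolding Phi_def using assms(1)[of i] assms(1)[of j] gam_nonneg[of N F j, OF assms] by simp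
qed

(* Not = 1: if nothing leaves j, all wgt F i j are 0 because of x / 0 = 0. *)
lemma sum_wgt_le_1:
  assumes "\<And>i. F i i = 0"
  shows "(\<Sum>i\<in>UNIV. wgt F i j) \<le> 1"
proof -
  define S where "S = (\<Sum>l\<in>UNIV - {j}. F l j)"
  have "(\<Sum>i\<in>UNIV. wgt F i j) = (\<Sum>i\<in>UNIV - {j}. F i j / S)"
    by (simp add: wgt_def S_def sum.remove[of UNIV j])
  also have "\<dots> = S / S"
    by (simp add: S_def sum_divide_distrib[symmetric])
  finally show ?thesis
    by (cases "S = 0") simp_all
qed

lemma sum_N_Phi_le:
  assumes "\<And>i. 0 < N i" and "\<And>i j. 0 \<le> F i j" and "\<And>i. F i i = 0"
  shows "(\<Sum>i\<in>UNIV. N i * Phi N F i j) \<le> N j * gam N F j"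
proof -
  have "N i * Phi N F i j = N j * gam N F j * wgt F i j" for i
    using assms(1)[of i] by (simp add: Phi_def)
  then have "(\<Sum>i\<in>UNIV. N i * Phi N F i j) = N j * gam N F j * (\<Sum>i\<in>UNIV. wgt F i j)"
    by (simp add: sum_distrib_left)
  also have "\<dots> \<le> N j * gam N F j"
    using sum_wgt_le_1[of F j, OF assms(3)] gam_nonneg[of N F j, OF assms(1,2)] assms(1)[of j]
    by (simp add: mult_left_le less_imp_le)
  finally show ?thesis .
qed

lemma Umat_nth [simp]:
  "Umat N F beta sig delta $ Inl i $ Inl j = (if i = j then - sig i - gam N F i else 0) + Phi N F i j"
  "Umat N F beta sig delta $ Inl i $ Inr j = (if i = j then beta i else 0)"
  "Umat N F beta sig delta $ Inr i $ Inl j = (if i = j then sig i else 0)"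
  "Umat N F beta sig delta $ Inr i $ Inr j = (if i = j then - delta i - gam N F i else 0) + Phi N F i j"
  by (simp_all add: Umat_def)

lemma metzler_Umat:
  assumes "\<And>i. 0 < N i" and "\<And>i j. 0 \<le> F i j" and "\<And>i. 0 < beta i" and "\<And>i. 0 < sig i"
  shows "metzler (Umat N F beta sig delta)"
  unfolding metzler_def
proof (intro allI impI)
  fix p q :: "'a + 'a"
  assume "p \<noteq> q"
  then show "0 \<le> Umat N F beta sig delta $ p $ q"
    using Phi_nonneg[OF assms(1,2)] assms(3,4) by (cases p; cases q) (auto simp: less_imp_le)
qed

definition seirs_coord :: "(real^'n) \<times> (real^'n) \<times> (real^'n) \<Rightarrow> ('n + 'n) + 'n \<Rightarrow> real" where
  "seirs_coord Y k = (case k of Inl (Inl i) \<Rightarrow> fst Y $ i | Inl (Inr i) \<Rightarrow> fst (snd Y) $ i | Inr i \<Rightarrow> snd (snd Y) $ i)"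

lemma seirs_coord_simps [simp]:
  "seirs_coord (e, x, r) (Inl (Inl i)) = e $ i"
  "seirs_coord (e, x, r) (Inl (Inr i)) = x $ i"
  "seirs_coord (e, x, r) (Inr i) = r $ i"
  by (simp_all add: seirs_coord_def)

lemma seirs_coord_cases:
  obtains (e) i where "k = Inl (Inl i)" | (x) i where "k = Inl (Inr i)" | (r) i where "k = Inr i"
  by (metis sum.exhaust)

lemma bounded_linear_seirs_coord: "bounded_linear (\<lambda>Y. seirs_coord Y k)"
  by (cases k rule: seirs_coord_cases)
     (auto simp: seirs_coord_def intro!: bounded_linear_compose[OF bounded_linear_vec_nth]
        bounded_linear_fst bounded_linear_snd bounded_linear_compose[OF bounded_linear_fst]
        bounded_linear_compose[OF bounded_linear_snd])

lemma abs_seirs_coord_le_norm: "\<bar>seirs_coord Y k\<bar> \<le> norm Y"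
proof -
  obtain e x r where Y: "Y = (e, x, r)"
    by (cases Y) auto
  have "norm e \<le> norm Y" "norm x \<le> norm Y" "norm r \<le> norm Y"
    using norm_fst_le[of e "(x, r)"] norm_snd_le[of "(x, r)" e] norm_fst_le[of x r] norm_snd_le[of r x]
    unfolding Y by linarith+
  then show ?thesis
    using component_le_norm_cart[of e] component_le_norm_cart[of x] component_le_norm_cart[of r]
    by (cases k rule: seirs_coord_cases) (auto simp: Y intro: order_trans)
qed

lemma norm_le_sum_abs_seirs_coord: "norm Y \<le> (\<Sum>k\<in>UNIV. \<bar>seirs_coord Y k\<bar>)"
proof -
  obtain e x r where Y: "Y = (e, x, r)"
    by (cases Y) auto
  have "norm Y \<le> norm e + (norm x + norm r)"
    unfolding Y using norm_Pair_le[of e "(x, r)"] norm_Pair_le[of x r] by linarith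
  also have "\<dots> \<le> (\<Sum>i\<in>UNIV. \<bar>e$i\<bar>) + ((\<Sum>i\<in>UNIV. \<bar>x$i\<bar>) + (\<Sum>i\<in>UNIV. \<bar>r$i\<bar>))"
    by (intro add_mono norm_le_l1_cart)
  finally show ?thesis
    by (simp add: Y sum_UNIV_Plus)
qed

(* Jacobian of seirs_field at the origin in the coordinates seirs_coord; its (e, x)-block is U. *)
definition seirs_lin :: "('n::finite \<Rightarrow> real) \<Rightarrow> ('n \<Rightarrow> 'n \<Rightarrow> real) \<Rightarrow> ('n \<Rightarrow> real) \<Rightarrow> ('n \<Rightarrow> real)
    \<Rightarrow> ('n \<Rightarrow> real) \<Rightarrow> ('n \<Rightarrow> real) \<Rightarrow> ('n + 'n) + 'n \<Rightarrow> ('n + 'n) + 'n \<Rightarrow> real" where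
  "seirs_lin N F alpha beta sig delta k l = (case (k, l) of
      (Inl p, Inl q) \<Rightarrow> Umat N F beta sig delta $ p $ q
    | (Inl p, Inr j) \<Rightarrow> 0
    | (Inr i, Inl q) \<Rightarrow> (if q = Inr i then delta i else 0)
    | (Inr i, Inr j) \<Rightarrow> (if i = j then - alpha i - gam N F i else 0) + Phi N F i j)"

lemma seirs_lin_simps [simp]:
  "seirs_lin N F alpha beta sig delta (Inl p) (Inl q) = Umat N F beta sig delta $ p $ q"
  "seirs_lin N F alpha beta sig delta (Inl p) (Inr j) = 0"
  "seirs_lin N F alpha beta sig delta (Inr i) (Inl q) = (if q = Inr i then delta i else 0)"
  "seirs_lin N F alpha beta sig delta (Inr i) (Inr j) = (if i = j then - alpha i - gam N F i else 0) + Phi N F i j"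
  by (simp_all add: seirs_lin_def)

lemma seirs_field_coord:
  "seirs_coord (seirs_field N F alpha beta sig delta (e, x, r)) k
     = (\<Sum>l\<in>UNIV. seirs_lin N F alpha beta sig delta k l * seirs_coord (e, x, r) l)
       - (case k of Inl (Inl i) \<Rightarrow> beta i * x$i * (e$i + x$i + r$i) | _ \<Rightarrow> 0)"
  by (cases k rule: seirs_coord_cases)
     (simp_all add: seirs_field_def seirs_coord_def sum_UNIV_Plus distrib_right sum.distrib
        if_distrib[of "\<lambda>a. a * _"] if_distrib[of "\<lambda>a. _ * a"] algebra_simps cong: if_cong)

lemma seirs_remainder_bound:
  assumes "\<And>i. 0 < beta i"
  shows "\<bar>seirs_coord (seirs_field N F alpha beta sig delta Y) k
      - (\<Sum>l\<in>UNIV. seirs_lin N F alpha beta sig delta k l * seirs_coord Y l)\<bar>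
    \<le> 3 * (\<Sum>i\<in>UNIV. beta i) * (\<Sum>l\<in>UNIV. \<bar>seirs_coord Y l\<bar>)\<^sup>2"
proof -
  obtain e x r where Y: "Y = (e, x, r)"
    by (cases Y) auto
  define W where "W = (\<Sum>l\<in>UNIV. \<bar>seirs_coord Y l\<bar>)"
  have coord_le_W: "\<bar>seirs_coord Y l\<bar> \<le> W" for l
    unfolding W_def by (rule member_le_sum) auto
  have "0 \<le> W" and "0 \<le> (\<Sum>i\<in>UNIV. beta i)"
    using assms by (simp_all add: W_def sum_nonneg less_imp_le)
  have "\<bar>beta i * x$i * (e$i + x$i + r$i)\<bar> \<le> 3 * (\<Sum>i\<in>UNIV. beta i) * W\<^sup>2" for i
  proof -
    have "\<bar>e$i\<bar> \<le> W" "\<bar>x$i\<bar> \<le> W" "\<bar>r$i\<bar> \<le> W"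
      using coord_le_W[of "Inl (Inl i)"] coord_le_W[of "Inl (Inr i)"] coord_le_W[of "Inr i"]
      by (simp_all add: Y)
    then have xs: "\<bar>x$i\<bar> * \<bar>e$i + x$i + r$i\<bar> \<le> W * (3 * W)"
      by (intro mult_mono) auto
    have b: "beta i \<le> (\<Sum>i\<in>UNIV. beta i)"
      using assms by (intro member_le_sum) (auto intro: less_imp_le)
    have "\<bar>beta i * x$i * (e$i + x$i + r$i)\<bar> = beta i * (\<bar>x$i\<bar> * \<bar>e$i + x$i + r$i\<bar>)"
      using assms[of i] by (simp add: abs_mult)
    also have "\<dots> \<le> (\<Sum>i\<in>UNIV. beta i) * (W * (3 * W))"
      by (rule mult_mono[OF b xs]) (use assms[of i] \<open>0 \<le> W\<close> \<open>0 \<le> (\<Sum>i\<in>UNIV. beta i)\<close> in auto)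
    also have "\<dots> = 3 * (\<Sum>i\<in>UNIV. beta i) * W\<^sup>2"
      by (simp add: power2_eq_square)
    finally show ?thesis .
  qed
  then show ?thesis
    unfolding W_def[symmetric] using \<open>0 \<le> W\<close> \<open>0 \<le> (\<Sum>i\<in>UNIV. beta i)\<close>
    by (cases k rule: seirs_coord_cases) (simp_all add: Y seirs_field_coord)
qed

lemma seirs_lin_offdiag_nonneg:
  assumes "\<And>i. 0 < N i" and "\<And>i j. 0 \<le> F i j"
    and "\<And>i. 0 < beta i" and "\<And>i. 0 < sig i" and "\<And>i. 0 < delta i"
    and "k \<noteq> l"
  shows "0 \<le> seirs_lin N F alpha beta sig delta k l"
  using metzler_Umat[where delta = delta, OF assms(1-4)] Phi_nonneg[OF assms(1,2)] assms(5,6)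
  by (cases k; cases l) (auto simp: metzler_def less_imp_le)

lemma ex_pos_mult_less_one:
  fixes c :: "'k::finite \<Rightarrow> real"
  assumes "\<And>j. 0 \<le> c j"
  obtains \<epsilon> where "0 < \<epsilon>" and "\<And>j. \<epsilon> * c j < 1"
proof
  have "0 \<le> (\<Sum>j\<in>UNIV. c j)" and le_sum: "c j \<le> (\<Sum>j\<in>UNIV. c j)" for j
    using assms by (simp_all add: sum_nonneg member_le_sum)
  then show "0 < 1 / (1 + (\<Sum>j\<in>UNIV. c j))"
    by (simp add: add_nonneg_pos)
  show "1 / (1 + (\<Sum>j\<in>UNIV. c j)) * c j < 1" for j
    using le_sum[of j] \<open>0 \<le> (\<Sum>j\<in>UNIV. c j)\<close> by (simp add: field_simps)
qed

lemma seirs_copositive_weights: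
  fixes w :: "real^('n::finite + 'n)"
  assumes N_pos: "\<And>i. 0 < N i" and F_nonneg: "\<And>i j. 0 \<le> F i j" and F_diag: "\<And>i. F i i = 0"
    and alpha_pos: "\<And>i. 0 < alpha i" and delta_pos: "\<And>i. 0 < delta i"
    and w_pos: "\<And>p. 0 < w$p" and w_U: "w v* Umat N F beta sig delta = - 1"
  obtains v where "\<And>k. 0 < v k"
    and "\<And>l. (\<Sum>k\<in>UNIV. v k * seirs_lin N F alpha beta sig delta k l) < 0"
proof -
  obtain \<epsilon> where "0 < \<epsilon>" and \<epsilon>_small: "\<And>j. \<epsilon> * (N j * delta j) < 1"
    using ex_pos_mult_less_one[of "\<lambda>j. N j * delta j"] N_pos delta_pos by (auto simp: less_imp_le)
  define v where "v k = (case k of Inl p \<Rightarrow> w$p | Inr i \<Rightarrow> \<epsilon> * N i)" for k :: "('n + 'n) + 'n"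
  have v_pos: "0 < v k" for k
    using w_pos N_pos \<open>0 < \<epsilon>\<close> by (cases k) (simp_all add: v_def)
  have split: "(\<Sum>k\<in>UNIV. v k * g k) = (\<Sum>p\<in>UNIV. w$p * g (Inl p)) + (\<Sum>i\<in>UNIV. \<epsilon> * N i * g (Inr i))"
    for g :: "('n + 'n) + 'n \<Rightarrow> real"
    unfolding sum_UNIV_Plus[of "\<lambda>k. v k * g k"] by (simp add: v_def)
  have "(\<Sum>k\<in>UNIV. v k * seirs_lin N F alpha beta sig delta k l) < 0" for l
  proof (cases l)
    case (Inl q)
    have "(\<Sum>p\<in>UNIV. w$p * Umat N F beta sig delta $ p $ q) = - 1"
      using arg_cong[OF w_U, of "\<lambda>u. u$q"] by (simp add: vector_matrix_mult_def)
    moreover have "(\<Sum>i\<in>UNIV. \<epsilon> * N i * (if q = Inr i then delta i else 0)) < 1"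
      using \<epsilon>_small by (cases q) (simp_all add: if_distrib[of "\<lambda>a. _ * a"] mult.assoc cong: if_cong)
    ultimately show ?thesis
      by (simp add: Inl split)
  next
    case (Inr j)
    have "(\<Sum>k\<in>UNIV. v k * seirs_lin N F alpha beta sig delta k l)
        = \<epsilon> * (N j * (- alpha j - gam N F j) + (\<Sum>i\<in>UNIV. N i * Phi N F i j))"
      by (simp add: Inr split distrib_left sum.distrib sum_distrib_left if_distrib[of "\<lambda>a. _ * a"]
          algebra_simps cong: if_cong)
    also have "\<dots> \<le> \<epsilon> * (- (N j * alpha j))"
      using sum_N_Phi_le[of N F j, OF N_pos F_nonneg F_diag] \<open>0 < \<epsilon>\<close>
      by (intro mult_left_mono) (simp_all add: algebra_simps)
    also have "\<dots> < 0"
      using \<open>0 < \<epsilon>\<close> N_pos[of j] alpha_pos[of j] by (simp add: mult_pos_neg)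
    finally show ?thesis .
  qed
  with v_pos show thesis
    by (rule that)
qed

lemma copositive_linearization_seirs:
  assumes "\<And>i. 0 < N i" and "\<And>i j. 0 \<le> F i j"
    and "\<And>i. 0 < beta i" and "\<And>i. 0 < sig i" and "\<And>i. 0 < delta i"
    and "\<And>k. 0 < v k" and "\<And>l. (\<Sum>k\<in>UNIV. v k * seirs_lin N F alpha beta sig delta k l) < 0"
  shows "copositive_linearization (seirs_field N F alpha beta sig delta) seirs_coord
      (seirs_lin N F alpha beta sig delta) (3 * (\<Sum>i\<in>UNIV. beta i)) v"
proof (rule copositive_linearization.intro)
  show "0 \<le> 3 * (\<Sum>i\<in>UNIV. beta i)"
    using assms(3) by (simp add: sum_nonneg less_imp_le)
qed (simp_all add: bounded_linear_seirs_coord norm_le_sum_abs_seirs_coord abs_seirs_coord_le_norm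
      seirs_remainder_bound seirs_lin_offdiag_nonneg assms)

theorem proposition3:
  fixes N :: "'n::finite \<Rightarrow> real" and F :: "'n \<Rightarrow> 'n \<Rightarrow> real"
    and alpha beta sig delta :: "'n \<Rightarrow> real"
  assumes N_pos: "\<And>i. N i > 0"
    and F_nonneg: "\<And>i j. F i j \<ge> 0"
    and F_diag: "\<And>i. F i i = 0"
    and A1: "\<And>j. (\<Sum>i\<in>UNIV - {j}. F j i) = (\<Sum>i\<in>UNIV - {j}. F i j)"
    and A2: "\<And>i. alpha i > 0" "\<And>i. beta i > 0" "\<And>i. sig i > 0" "\<And>i. delta i > 0"
    and sU: "spectral_abscissa (Umat N F beta sig delta) < 0"
  shows "loc_exp_stable_origin (seirs_field N F alpha beta sig delta) admissible"
proof -
  have "metzler (Umat N F beta sig delta)"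
    by (rule metzler_Umat[OF N_pos F_nonneg A2(2,3)])
  moreover have "det (mat s - Umat N F beta sig delta) \<noteq> 0" if "0 \<le> s" for s
    using sU that by (intro det_mat_minus_nonzero_above_spectral_abscissa) simp
  ultimately obtain w where "\<And>p. 0 < w$p" and "w v* Umat N F beta sig delta = - 1"
    using metzler_pos_left_vector by blast
  then obtain v where "\<And>k. 0 < v k"
    and "\<And>l. (\<Sum>k\<in>UNIV. v k * seirs_lin N F alpha beta sig delta k l) < 0"
    by (rule seirs_copositive_weights[where N = N and F = F and alpha = alpha and delta = delta,
          OF N_pos F_nonneg F_diag A2(1,4)]) blast
  then have "copositive_linearization (seirs_field N F alpha beta sig delta) seirs_coord
      (seirs_lin N F alpha beta sig delta) (3 * (\<Sum>i\<in>UNIV. beta i)) v"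
    using N_pos F_nonneg A2 by (simp add: copositive_linearization_seirs)
  then show ?thesis
    by (rule copositive_linearization.loc_exp_stable_origin)
qed

end
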